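(* Let $X$ be a real Hilbert space and $I$ either $[0,T]$ ($T>0$) or $[0,+\infty)$. Assume: $K\subset X$ is a nonempty closed convex cone; $A:X\to X$ satisfies $(Au-Av,u-v)_X\ge m_A\|u-v\|_X^2$ and $\|Au-Av\|_X\le L_A\|u-v\|_X$ for all $u,v\in X$, with $m_A,L_A>0$; $f\in C(I;X)$; $\mathcal{S}:C(I;X)\to C(I;X)$ is a history-dependent operator; $j:K\to\mathbb{R}$ is a convex, positively homogeneous, Lipschitz continuous function. Then there exists a unique function $u\in C(I;K)$ such that $$-u(t)\in \mathrm{N}_{C(t)}\big(Au(t)+\mathcal{S}u(t)\big)\quad\forall\,t\in I.$$
   Context: $\mathcal{S}$ is history-dependent if for every compact $\mathcal J\subset I$ there is $L_{\mathcal J}>0$ with $\|\mathcal{S}u_1(t)-\mathcal{S}u_2(t)\|_X\le L_{\mathcal J}\int_0^t\|u_1(s)-u_2(s)\|_X ds$ for all $u_1,u_2\in C(I;X)$, $t\in\mathcal J$. Define $J:X\to(-\infty,+\infty]$ by $J(v)=j(v)$ if $v\in K$, $J(v)=+\infty$ otherwise; $C=\{\xi\in X:J(v)\ge(\xi,v)_X\ \forall v\in X\}$ and $C(t)=f(t)-C$ for $t\in I$. For a nonempty closed convex $D\subset X$, $\mathrm{N}_D(x)=\{\xi:(\xi,w-x)_X\le0\ \forall w\in D\}$ if $x\in D$, $\emptyset$ otherwise. *)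

theory Defs
  imports "HOL-Analysis.Analysis"
begin

definition Jext :: "'a set \<Rightarrow> ('a \<Rightarrow> real) \<Rightarrow> 'a \<Rightarrow> ereal" where
  "Jext K j v = (if v \<in> K then ereal (j v) else PInfty)"

definition Cset :: "'a::real_inner set \<Rightarrow> ('a \<Rightarrow> real) \<Rightarrow> 'a set" where
  "Cset K j = {\<xi>. \<forall>v. Jext K j v \<ge> ereal (inner \<xi> v)}"

definition Ct :: "'a::real_inner set \<Rightarrow> ('a \<Rightarrow> real) \<Rightarrow> (real \<Rightarrow> 'a) \<Rightarrow> real \<Rightarrow> 'a set" where
  "Ct K j f t = (\<lambda>\<xi>. f t - \<xi>) ` Cset K j"

definition NormalCone :: "'a::real_inner set \<Rightarrow> 'a \<Rightarrow> 'a set" where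
  "NormalCone D x = (if x \<in> D then {\<xi>. \<forall>w\<in>D. inner \<xi> (w - x) \<le> 0} else {})"

definition history_dependent :: "real set \<Rightarrow> ((real \<Rightarrow> 'a::real_normed_vector) \<Rightarrow> (real \<Rightarrow> 'a)) \<Rightarrow> bool" where
  "history_dependent I S \<longleftrightarrow>
     (\<forall>J. compact J \<and> J \<subseteq> I \<longrightarrow>
        (\<exists>L>0. \<forall>u1 u2. continuous_on I u1 \<and> continuous_on I u2 \<longrightarrow>
           (\<forall>t\<in>J. norm (S u1 t - S u2 t) \<le> L * integral {0..t} (\<lambda>s. norm (u1 s - u2 s)))))"

end

theory Submission
  imports Defs
begin

(*
  For a fixed right-hand side g, the pointwise inclusion u \<in> N_C(g - A u) becomes, in the
  unknown \<eta> = g - A u, a variational inequality on C for the map \<eta> \<mapsto> - A\<^sup>-\<^sup>1 (g - \<eta>),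
  which inherits strong monotonicity and Lipschitz continuity from A; projected iteration
  is a contraction, so it has a solution, and monotonicity of normal cones makes the solution
  u = R g unique and (1 / m_A)-Lipschitz in g. Every element of a normal cone of C lies in K
  (project onto K and perturb by the polar part), and C is nonempty by separating (0, -1)
  from the epigraph of j, a closed convex cone.

  The problem thus reads u(t) = R (f(t) - S u(t)), a fixed point of a history-dependent
  operator. Its Picard iterates have increments bounded by M (c t)\<^sup>n / n! on every [0, b],
  so they converge locally uniformly; the same Volterra-type estimate yields uniqueness.
*)

section \<open>Nearest points in Hilbert spaces\<close>

lemma parallelogram_midpoint:
  fixes a x z :: "'a::real_inner"
  shows "(norm (x - z))\<^sup>2 = 2 * (norm (a - x))\<^sup>2 + 2 * (norm (a - z))\<^sup>2
           - 4 * (norm (a - ((1/2) *\<^sub>R x + (1/2) *\<^sub>R z)))\<^sup>2"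
  unfolding power2_norm_eq_inner
  by (simp add: inner_diff_left inner_diff_right inner_add_left inner_add_right inner_commute
      algebra_simps)

lemma minimizing_sequence_Cauchy:
  fixes S :: "'a::real_inner set"
  assumes "convex S" and yS: "\<And>n. y n \<in> S"
    and dist_lim: "(\<lambda>n. dist a (y n)) \<longlonglongrightarrow> infdist a S"
  shows "Cauchy y"
proof (rule metric_CauchyI)
  let ?d = "infdist a S"
  have y_close: "(dist (y m) (y n))\<^sup>2 \<le> 2 * ((dist a (y m))\<^sup>2 - ?d\<^sup>2) + 2 * ((dist a (y n))\<^sup>2 - ?d\<^sup>2)"
    for m n
  proof -
    have "(1/2) *\<^sub>R y m + (1/2) *\<^sub>R y n \<in> S"
      using \<open>convex S\<close> yS by (simp add: convex_def)
    then have "?d \<le> dist a ((1/2) *\<^sub>R y m + (1/2) *\<^sub>R y n)"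
      by (rule infdist_le)
    then have "?d\<^sup>2 \<le> (dist a ((1/2) *\<^sub>R y m + (1/2) *\<^sub>R y n))\<^sup>2"
      by (rule power_mono) (simp add: infdist_nonneg)
    then show ?thesis
      using parallelogram_midpoint[of "y m" "y n" a] by (simp add: dist_norm)
  qed
  have excess_lim: "(\<lambda>n. (dist a (y n))\<^sup>2 - ?d\<^sup>2) \<longlonglongrightarrow> 0"
    using tendsto_diff[OF tendsto_power[OF dist_lim, of 2] tendsto_const[of "?d\<^sup>2"]] by simp
  fix e :: real
  assume "e > 0"
  then have "e\<^sup>2 / 4 > 0" by simp
  then obtain N where "\<forall>n\<ge>N. \<bar>(dist a (y n))\<^sup>2 - ?d\<^sup>2\<bar> < e\<^sup>2 / 4"
    using excess_lim[unfolded lim_sequentially] unfolding dist_real_def diff_zero by blast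
  then have N: "\<And>n. n \<ge> N \<Longrightarrow> (dist a (y n))\<^sup>2 - ?d\<^sup>2 < e\<^sup>2 / 4"
    by (meson abs_less_iff)
  have "dist (y m) (y n) < e" if "m \<ge> N" "n \<ge> N" for m n
  proof -
    have "(dist (y m) (y n))\<^sup>2 < e\<^sup>2"
      using y_close[of m n] N[OF that(1)] N[OF that(2)] by (simp add: field_simps)
    then show ?thesis using \<open>e > 0\<close> by (simp add: power_less_imp_less_base)
  qed
  then show "\<exists>M. \<forall>m\<ge>M. \<forall>n\<ge>M. dist (y m) (y n) < e" by blast
qed

lemma nearest_point_exists:
  fixes S :: "'a::{real_inner,complete_space} set"
  assumes "closed S" "convex S" "S \<noteq> {}"
  shows "\<exists>p\<in>S. \<forall>y\<in>S. dist a p \<le> dist a y"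
proof -
  define d where "d = infdist a S"
  have d_le: "d \<le> dist a y" if "y \<in> S" for y
    unfolding d_def using that by (rule infdist_le)
  have "\<exists>y\<in>S. dist a y < d + 1 / Suc n" for n
  proof -
    have "(INF y\<in>S. dist a y) < d + 1 / Suc n"
      using \<open>S \<noteq> {}\<close> by (simp add: d_def infdist_notempty)
    then show ?thesis
      using \<open>S \<noteq> {}\<close> by (subst (asm) cINF_less_iff) auto
  qed
  then obtain y where yS: "\<And>n. y n \<in> S" and y_lt: "\<And>n. dist a (y n) < d + 1 / Suc n"
    by metis
  have dist_lim: "(\<lambda>n. dist a (y n)) \<longlonglongrightarrow> d"
  proof (rule real_tendsto_sandwich)
    show "\<forall>\<^sub>F n in sequentially. d \<le> dist a (y n)" by (simp add: d_le yS)
    show "\<forall>\<^sub>F n in sequentially. dist a (y n) \<le> d + 1 / Suc n" using y_lt by (simp add: less_imp_le)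
    show "(\<lambda>n. d + 1 / Suc n) \<longlonglongrightarrow> d"
      using tendsto_add[OF tendsto_const LIMSEQ_Suc[OF lim_inverse_n']] by (simp add: divide_inverse)
  qed simp
  then have "Cauchy y"
    using minimizing_sequence_Cauchy[OF \<open>convex S\<close> yS] by (simp add: d_def)
  then obtain p where "y \<longlonglongrightarrow> p"
    using Cauchy_convergent_iff convergent_def by blast
  then have "p \<in> S" and "dist a p = d"
    using \<open>closed S\<close> yS closed_sequentially
      tendsto_unique[OF _ tendsto_dist[OF tendsto_const \<open>y \<longlonglongrightarrow> p\<close>] dist_lim]
    by auto
  then show ?thesis using d_le by auto
qed

definition nearest_point :: "'a::real_inner set \<Rightarrow> 'a \<Rightarrow> 'a" where
  "nearest_point S a = (SOME p. p \<in> S \<and> (\<forall>y\<in>S. dist a p \<le> dist a y))"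

context
  fixes S :: "'a::{real_inner,complete_space} set"
  assumes S: "closed S" "convex S" "S \<noteq> {}"
begin

lemma nearest_point:
  shows nearest_point_in_set: "nearest_point S a \<in> S"
    and nearest_point_le: "\<And>y. y \<in> S \<Longrightarrow> dist a (nearest_point S a) \<le> dist a y"
  using someI_ex[OF nearest_point_exists[OF S, of a, unfolded Bex_def]]
  unfolding nearest_point_def by auto

lemma nearest_point_dot:
  "y \<in> S \<Longrightarrow> inner (a - nearest_point S a) (y - nearest_point S a) \<le> 0"
  using any_closest_point_dot[OF S(2,1) nearest_point_in_set] nearest_point_le by blast

lemma nearest_point_lipschitz:
  "dist (nearest_point S x) (nearest_point S y) \<le> dist x y"
proof -
  have "inner (x - nearest_point S x) (nearest_point S y - nearest_point S x) \<le> 0"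
    and "inner (y - nearest_point S y) (nearest_point S x - nearest_point S y) \<le> 0"
    by (simp_all add: nearest_point_dot nearest_point_in_set)
  then show ?thesis
    unfolding dist_norm norm_le
    using inner_ge_zero[of "(x - nearest_point S x) - (y - nearest_point S y)"]
    by (simp add: inner_add inner_diff inner_commute)
qed

end

lemma nearest_point_cone:
  fixes S :: "'a::{real_inner,complete_space} set"
  assumes "closed S" "convex S" "cone S" "S \<noteq> {}"
  obtains p where "p \<in> S" "inner (a - p) p = 0" "\<forall>y\<in>S. inner (a - p) y \<le> 0"
proof
  let ?p = "nearest_point S a"
  have p: "?p \<in> S" by (rule nearest_point_in_set[OF assms(1,2,4)])
  have dot: "inner (a - ?p) (y - ?p) \<le> 0" if "y \<in> S" for y
    using nearest_point_dot[OF assms(1,2,4) that] .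
  have "0 \<in> S" "2 *\<^sub>R ?p \<in> S"
    using \<open>cone S\<close> \<open>S \<noteq> {}\<close> p unfolding cone_def by (fastforce, simp)
  from dot[OF this(1)] dot[OF this(2)] show orth: "inner (a - ?p) ?p = 0"
    by (simp add: algebra_simps)
  show "\<forall>y\<in>S. inner (a - ?p) y \<le> 0"
    using dot orth by (simp add: inner_diff_right)
qed (rule nearest_point_in_set[OF assms(1,2,4)])

section \<open>Normal cones and strongly monotone operators\<close>

lemma NormalCone_UNIV: "NormalCone UNIV x = {0}"
proof -
  have "\<xi> = 0" if "\<forall>w. inner \<xi> (w - x) \<le> 0" for \<xi> :: 'a
    using that[rule_format, of "x + \<xi>"] inner_ge_zero[of \<xi>] by simp
  then show ?thesis unfolding NormalCone_def by auto
qed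

lemma NormalCone_monotone:
  assumes "u \<in> NormalCone D x" "v \<in> NormalCone D y"
  shows "inner (u - v) (x - y) \<ge> 0"
proof -
  have "x \<in> D" "y \<in> D" "inner u (y - x) \<le> 0" "inner v (x - y) \<le> 0"
    using assms unfolding NormalCone_def by (auto split: if_splits)
  then show ?thesis by (simp add: inner_diff algebra_simps)
qed

lemma uminus_in_NormalCone_reflection:
  "- u \<in> NormalCone ((\<lambda>\<xi>. c - \<xi>) ` D) w \<longleftrightarrow> u \<in> NormalCone D (c - w)"
proof -
  have "w \<in> (\<lambda>\<xi>. c - \<xi>) ` D \<longleftrightarrow> c - w \<in> D"
    by (auto intro: image_eqI[of w _ "c - w"])
  moreover have "inner (- u) ((c - \<xi>) - w) = inner u (\<xi> - (c - w))" for \<xi>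
    by (simp add: inner_diff_right algebra_simps)
  ultimately show ?thesis unfolding NormalCone_def by auto
qed

lemma norm_le_if_inner_ge:
  fixes a d :: "'a::real_inner"
  assumes "m * (norm d)\<^sup>2 \<le> inner a d"
  shows "m * norm d \<le> norm a"
proof (cases "d = 0")
  case False
  have "(m * norm d) * norm d \<le> norm a * norm d"
    using assms norm_cauchy_schwarz[of a d] by (simp add: power2_eq_square algebra_simps)
  then show ?thesis using False by simp
qed simp

context
  fixes F :: "'a::real_inner \<Rightarrow> 'a" and m L :: real
  assumes m: "m > 0" and L: "L > 0"
    and strong: "\<And>x y. inner (F x - F y) (x - y) \<ge> m * (norm (x - y))\<^sup>2"
    and lip: "\<And>x y. norm (F x - F y) \<le> L * norm (x - y)"
begin

lemma strongly_monotone_norm_le: "m * norm (x - y) \<le> norm (F x - F y)"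
  using norm_le_if_inner_ge[OF strong] by (simp add: inner_commute)

lemma strongly_monotone_cocoercive: "(m / L\<^sup>2) * (norm (F x - F y))\<^sup>2 \<le> inner (F x - F y) (x - y)"
proof -
  have "(norm (F x - F y))\<^sup>2 \<le> (L * norm (x - y))\<^sup>2"
    using lip[of x y] by (rule power_mono) auto
  then have "(norm (F x - F y))\<^sup>2 \<le> L\<^sup>2 * (norm (x - y))\<^sup>2"
    by (simp add: power_mult_distrib)
  then have "(m / L\<^sup>2) * (norm (F x - F y))\<^sup>2 \<le> m * (norm (x - y))\<^sup>2"
    using m L by (simp add: field_simps mult_left_mono)
  then show ?thesis using strong[of x y] by linarith
qed

lemma strongly_monotone_contraction:
  obtains \<rho> c where "\<rho> > 0" "0 \<le> c" "c < 1"
    "\<forall>x y. dist (x - \<rho> *\<^sub>R F x) (y - \<rho> *\<^sub>R F y) \<le> c * dist x y"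
proof -
  \<comment> \<open>\<open>L + m\<close> rather than \<open>L\<close>: \<open>m < L'\<close> keeps the factor \<open>sqrt (1 - m\<^sup>2 / L'\<^sup>2)\<close> real.\<close>
  define L' where "L' = L + m"
  define \<rho> where "\<rho> = m / L'\<^sup>2"
  define c where "c = sqrt (1 - m\<^sup>2 / L'\<^sup>2)"
  have L': "L' > 0" "m < L'" using m L by (auto simp: L'_def)
  then have "m\<^sup>2 < L'\<^sup>2" using m by (simp add: power_strict_mono)
  then have q: "0 < m\<^sup>2 / L'\<^sup>2" "m\<^sup>2 / L'\<^sup>2 < 1" using m L' by (auto simp: divide_less_eq)
  then have c: "0 \<le> c" "c < 1" "c\<^sup>2 = 1 - m\<^sup>2 / L'\<^sup>2" by (auto simp: c_def)
  have \<rho>: "\<rho> > 0" using m L' by (simp add: \<rho>_def)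
  have expand: "(norm (d - \<rho> *\<^sub>R D))\<^sup>2 = (norm d)\<^sup>2 - 2 * \<rho> * inner D d + \<rho>\<^sup>2 * (norm D)\<^sup>2"
    for d D :: 'a
    using dot_norm_neg[of d "\<rho> *\<^sub>R D"] by (simp add: inner_commute power_mult_distrib)
  have factor: "n - 2 * \<rho> * (m * n) + \<rho>\<^sup>2 * (L'\<^sup>2 * n) = c\<^sup>2 * n" for n
    unfolding c(3) \<rho>_def using L' by (simp add: field_simps power2_eq_square)
  have "dist (x - \<rho> *\<^sub>R F x) (y - \<rho> *\<^sub>R F y) \<le> c * dist x y" for x y
  proof -
    let ?d = "x - y" and ?D = "F x - F y"
    have "norm ?D \<le> L' * norm ?d"
      using lip[of x y] m by (simp add: L'_def distrib_right add_increasing2)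
    then have "(norm ?D)\<^sup>2 \<le> (L' * norm ?d)\<^sup>2" by (rule power_mono) auto
    then have lip': "(norm ?D)\<^sup>2 \<le> L'\<^sup>2 * (norm ?d)\<^sup>2" by (simp add: power_mult_distrib)
    have "(norm (?d - \<rho> *\<^sub>R ?D))\<^sup>2 = (norm ?d)\<^sup>2 - 2 * \<rho> * inner ?D ?d + \<rho>\<^sup>2 * (norm ?D)\<^sup>2"
      by (rule expand)
    also have "\<dots> \<le> (norm ?d)\<^sup>2 - 2 * \<rho> * (m * (norm ?d)\<^sup>2) + \<rho>\<^sup>2 * (L'\<^sup>2 * (norm ?d)\<^sup>2)"
    proof -
      have "2 * \<rho> * (m * (norm ?d)\<^sup>2) \<le> 2 * \<rho> * inner ?D ?d"
        using strong[of x y] \<rho> by simp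
      moreover have "\<rho>\<^sup>2 * (norm ?D)\<^sup>2 \<le> \<rho>\<^sup>2 * (L'\<^sup>2 * (norm ?d)\<^sup>2)"
        using lip' by (simp add: mult_left_mono)
      ultimately show ?thesis by linarith
    qed
    also have "\<dots> = c\<^sup>2 * (norm ?d)\<^sup>2" by (rule factor)
    also have "\<dots> = (c * norm ?d)\<^sup>2" by (simp add: power_mult_distrib)
    finally have "norm (?d - \<rho> *\<^sub>R ?D) \<le> c * norm ?d"
      using c by (auto intro: power2_le_imp_le)
    moreover have "(x - \<rho> *\<^sub>R F x) - (y - \<rho> *\<^sub>R F y) = ?d - \<rho> *\<^sub>R ?D"
      by (simp add: algebra_simps)
    ultimately show ?thesis by (simp only: dist_norm)
  qed
  then show ?thesis using \<rho> c that by blast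
qed

end

lemma strongly_monotone_variational_inequality:
  fixes F :: "'a::{real_inner,complete_space} \<Rightarrow> 'a" and C :: "'a set"
  assumes C: "closed C" "convex C" "C \<noteq> {}"
    and m: "m > 0" and L: "L > 0"
    and strong: "\<And>x y. inner (F x - F y) (x - y) \<ge> m * (norm (x - y))\<^sup>2"
    and lip: "\<And>x y. norm (F x - F y) \<le> L * norm (x - y)"
  obtains x where "- F x \<in> NormalCone C x"
proof -
  obtain \<rho> c where \<rho>: "\<rho> > 0" "0 \<le> c" "c < 1"
    and contr: "\<forall>x y. dist (x - \<rho> *\<^sub>R F x) (y - \<rho> *\<^sub>R F y) \<le> c * dist x y"
    by (rule strongly_monotone_contraction[OF m L strong lip])
  let ?T = "\<lambda>x. nearest_point C (x - \<rho> *\<^sub>R F x)"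
  have "\<forall>x y. dist (?T x) (?T y) \<le> c * dist x y"
    using order_trans[OF nearest_point_lipschitz[OF C] contr[rule_format]] by blast
  from banach_fix_type[OF \<rho>(2,3) this] obtain x where x: "?T x = x"
    by (auto dest: ex1_implies_ex)
  then have "x \<in> C"
    using nearest_point_in_set[OF C, of "x - \<rho> *\<^sub>R F x"] by simp
  moreover have "inner (- F x) (\<xi> - x) \<le> 0" if "\<xi> \<in> C" for \<xi>
  proof -
    have "\<rho> * inner (- F x) (\<xi> - x) \<le> 0"
      using nearest_point_dot[OF C that, of "x - \<rho> *\<^sub>R F x"] x by simp
    then show ?thesis using \<rho>(1) by (simp add: zero_le_mult_iff)
  qed
  ultimately have "- F x \<in> NormalCone C x" unfolding NormalCone_def by simp
  then show ?thesis by (rule that)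
qed

context
  fixes A :: "'a::{real_inner,complete_space} \<Rightarrow> 'a" and m L :: real
  assumes m: "m > 0" and L: "L > 0"
    and strong: "\<And>x y. inner (A x - A y) (x - y) \<ge> m * (norm (x - y))\<^sup>2"
    and lip: "\<And>x y. norm (A x - A y) \<le> L * norm (x - y)"
begin

lemma strongly_monotone_surj: "surj A"
proof -
  have "\<exists>x. y = A x" for y
  proof -
    obtain x where "- (A x - y) \<in> NormalCone UNIV x"
      by (rule strongly_monotone_variational_inequality[where C = UNIV and F = "\<lambda>x. A x - y" and m = m and L = L])
        (use m L strong lip in auto)
    then show ?thesis by (auto simp: NormalCone_UNIV)
  qed
  then show ?thesis unfolding surj_def ..
qed

lemma NormalCone_inclusion_exists:
  assumes C: "closed C" "convex C" "C \<noteq> {}"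
  obtains u where "u \<in> NormalCone C (g - A u)"
proof -
  let ?B = "inv A"
  have AB: "A (?B y) = y" for y
    by (rule surj_f_inv_f[OF strongly_monotone_surj])
  define F where "F \<eta> = - ?B (g - \<eta>)" for \<eta>
  have F_eq: "F a - F b = ?B (g - b) - ?B (g - a)" and A_eq: "A (?B (g - b)) - A (?B (g - a)) = a - b"
    for a b by (simp_all add: F_def AB)
  have F_strong: "inner (F a - F b) (a - b) \<ge> (m / L\<^sup>2) * (norm (a - b))\<^sup>2" for a b
    using strongly_monotone_cocoercive[OF m L strong lip, of "?B (g - b)" "?B (g - a)"]
    unfolding F_eq A_eq by (simp add: inner_commute)
  have F_lip: "norm (F a - F b) \<le> (1 / m) * norm (a - b)" for a b
    using strongly_monotone_norm_le[OF m L strong lip, of "?B (g - b)" "?B (g - a)"] m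
    unfolding F_eq A_eq by (simp add: field_simps)
  obtain \<eta> where "- F \<eta> \<in> NormalCone C \<eta>"
    by (rule strongly_monotone_variational_inequality[OF C _ _ F_strong F_lip]) (use m L in auto)
  then have "?B (g - \<eta>) \<in> NormalCone C (g - A (?B (g - \<eta>)))"
    by (simp add: F_def AB)
  then show ?thesis by (rule that)
qed

lemma NormalCone_inclusion_stability:
  assumes "u \<in> NormalCone C (g - A u)" "v \<in> NormalCone C (h - A v)"
  shows "m * norm (u - v) \<le> norm (g - h)"
proof -
  have "0 \<le> inner (u - v) ((g - h) - (A u - A v))"
    using NormalCone_monotone[OF assms] by (simp add: algebra_simps)
  then have "inner (A u - A v) (u - v) \<le> inner (g - h) (u - v)"
    by (simp add: inner_diff_right inner_commute)
  then have "m * (norm (u - v))\<^sup>2 \<le> inner (g - h) (u - v)"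
    using strong[of u v] by linarith
  then show ?thesis by (rule norm_le_if_inner_ge)
qed

lemma NormalCone_inclusion_solution_map:
  assumes C: "closed C" "convex C" "C \<noteq> {}"
  obtains R where "(1 / m)-lipschitz_on UNIV R"
    and "\<forall>g u. u \<in> NormalCone C (g - A u) \<longleftrightarrow> u = R g"
proof
  define R where "R g = (SOME u. u \<in> NormalCone C (g - A u))" for g
  have R: "R g \<in> NormalCone C (g - A (R g))" for g
  proof -
    obtain u where "u \<in> NormalCone C (g - A u)"
      by (rule NormalCone_inclusion_exists[OF C])
    then show ?thesis unfolding R_def by (rule someI)
  qed
  show "\<forall>g u. u \<in> NormalCone C (g - A u) \<longleftrightarrow> u = R g"
  proof (intro allI iffI)
    fix g u assume "u \<in> NormalCone C (g - A u)"
    from NormalCone_inclusion_stability[OF this R, of g] show "u = R g"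
      using m by (simp add: mult_le_0_iff)
  qed (use R in simp)
  show "(1 / m)-lipschitz_on UNIV R"
  proof (rule lipschitz_onI)
    fix g h
    show "dist (R g) (R h) \<le> (1 / m) * dist g h"
      using NormalCone_inclusion_stability[OF R R, of g h] m
      by (simp add: dist_norm field_simps)
  qed (use m in simp)
qed

end

section \<open>The set \<open>C\<close> of functionals dominated by \<open>j\<close>\<close>

lemma Cset_eq: "Cset K j = {\<xi>. \<forall>v\<in>K. inner \<xi> v \<le> j v}"
  unfolding Cset_def Jext_def by auto

lemma Cset_eq_INT: "Cset K j = (\<Inter>v\<in>K. {\<xi>. inner v \<xi> \<le> j v})"
  unfolding Cset_eq by (auto simp: inner_commute)

lemma closed_Cset: "closed (Cset K j)"
  unfolding Cset_eq_INT by (auto intro!: closed_INT closed_halfspace_le)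

lemma convex_Cset: "convex (Cset K j)"
  unfolding Cset_eq_INT by (auto intro!: convex_INT convex_halfspace_le)

lemma cone_epigraph:
  assumes "cone S" and hom: "\<And>c v. c > 0 \<Longrightarrow> v \<in> S \<Longrightarrow> f (c *\<^sub>R v) = c * f v"
  shows "cone (epigraph S f)"
  unfolding cone_def
proof (intro ballI allI impI)
  fix z :: "'a \<times> real" and c :: real
  assume z: "z \<in> epigraph S f" and "c \<ge> 0"
  then consider "c = 0" | "c > 0" by linarith
  then show "c *\<^sub>R z \<in> epigraph S f"
  proof cases
    case 1
    have "0 \<in> S" using \<open>cone S\<close> z unfolding cone_def epigraph_def by force
    then show ?thesis using 1 hom[of 2 0] by (simp add: epigraph_def)
  next
    case 2
    then show ?thesis using z \<open>cone S\<close> hom unfolding cone_def epigraph_def by simp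
  qed
qed

lemma closed_epigraph:
  assumes "closed S" "continuous_on S f"
  shows "closed (epigraph S f)"
proof -
  have "epigraph S f = (S \<times> UNIV) \<inter> (\<lambda>z. f (fst z) - snd z) -` {..0}"
    unfolding epigraph_def by auto
  moreover have "continuous_on (S \<times> UNIV) (\<lambda>z. f (fst z) - snd z)"
    by (intro continuous_intros continuous_on_compose2[OF assms(2)]) auto
  ultimately show ?thesis
    using assms(1) by (auto intro!: continuous_closed_preimage closed_Times)
qed

lemma Cset_nonempty:
  fixes K :: "'a::{real_inner,complete_space} set"
  assumes K: "closed K" "convex K" "cone K" "K \<noteq> {}"
    and j_convex: "convex_on K j" and j_cont: "continuous_on K j"
    and j_hom: "\<And>c v. c > 0 \<Longrightarrow> v \<in> K \<Longrightarrow> j (c *\<^sub>R v) = c * j v"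
  shows "Cset K j \<noteq> {}"
proof -
  let ?E = "epigraph K j"
  have "0 \<in> K" using K(3,4) unfolding cone_def by force
  then have j0: "j 0 = 0" using j_hom[of 2 0] by simp
  have E: "closed ?E" "convex ?E" "cone ?E" "?E \<noteq> {}"
    using closed_epigraph[OF K(1) j_cont] convex_epigraphI[OF j_convex] cone_epigraph[OF K(3) j_hom]
      \<open>0 \<in> K\<close> j0 by (auto simp: epigraph_def)
  \<comment> \<open>The normal \<open>n\<close> separating \<open>(0, -1) \<notin> E\<close> from the cone \<open>E\<close> has
    \<open>snd n < 0\<close>; its \<open>K\<close>-component, divided by \<open>- snd n\<close>, lies in \<open>Cset K j\<close>.\<close>
  obtain p where p: "p \<in> ?E" "inner ((0, -1) - p) p = 0"
    and sep: "\<forall>e\<in>?E. inner ((0, -1) - p) e \<le> 0"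
    by (rule nearest_point_cone[OF E])
  define n where "n = (0, -1) - p"
  have "(0, -1) \<notin> ?E" using j0 by (simp add: epigraph_def)
  then have "n \<noteq> 0" using p(1) by (auto simp: n_def)
  have "inner n n = inner n (0, -1) - inner n p"
    by (simp add: n_def inner_diff_right)
  also have "\<dots> = - snd n"
    using p(2) by (simp add: n_def[symmetric] inner_prod_def)
  finally have n_neg: "snd n < 0"
    using \<open>n \<noteq> 0\<close> inner_gt_zero_iff[of n] by linarith
  have "inner ((- 1 / snd n) *\<^sub>R fst n) v \<le> j v" if "v \<in> K" for v
  proof -
    have "inner (fst n) v + snd n * j v \<le> 0"
      using sep[rule_format, of "(v, j v)"] that by (simp add: n_def[symmetric] epigraph_def inner_prod_def)
    then show ?thesis using n_neg by (simp add: field_simps)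
  qed
  then show ?thesis unfolding Cset_eq by blast
qed

lemma NormalCone_Cset_subset:
  fixes K :: "'a::{real_inner,complete_space} set"
  assumes K: "closed K" "convex K" "cone K" "K \<noteq> {}"
  shows "NormalCone (Cset K j) \<eta> \<subseteq> K"
proof
  fix u assume u: "u \<in> NormalCone (Cset K j) \<eta>"
  obtain p where p: "p \<in> K" "inner (u - p) p = 0" and sep: "\<forall>y\<in>K. inner (u - p) y \<le> 0"
    by (rule nearest_point_cone[OF K, where a = u])
  have \<eta>: "\<eta> \<in> Cset K j"
    using u unfolding NormalCone_def by (auto split: if_splits)
  \<comment> \<open>Shifting \<open>\<eta>\<close> by the polar vector \<open>u - p\<close> stays in \<open>Cset K j\<close>, which forces \<open>u = p\<close>.\<close>
  have "inner (\<eta> + (u - p)) v \<le> j v" if "v \<in> K" for v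
    using \<eta> sep that unfolding Cset_eq by (force simp: inner_add_left)
  then have "\<eta> + (u - p) \<in> Cset K j" unfolding Cset_eq by blast
  then have "inner u (u - p) \<le> 0"
    using u unfolding NormalCone_def by (auto split: if_splits)
  moreover have "inner u (u - p) = inner (u - p) (u - p)"
    using p(2) by (simp add: inner_diff_left inner_commute)
  ultimately have "u - p = 0"
    using inner_gt_zero_iff[of "u - p"] by linarith
  then show "u \<in> K" using p(1) by simp
qed

lemma uminus_in_NormalCone_Ct_iff:
  fixes K :: "'a::{real_inner,complete_space} set"
  assumes K: "closed K" "convex K" "cone K" "K \<noteq> {}"
    and R: "\<forall>g u. u \<in> NormalCone (Cset K j) (g - A u) \<longleftrightarrow> u = R g"
  shows "w \<in> K \<and> - w \<in> NormalCone (Ct K j f t) (A w + s) \<longleftrightarrow> R (f t - s) = w"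
proof -
  have "- w \<in> NormalCone (Ct K j f t) (A w + s) \<longleftrightarrow> w \<in> NormalCone (Cset K j) ((f t - s) - A w)"
    unfolding Ct_def uminus_in_NormalCone_reflection by (simp add: algebra_simps)
  moreover have "w \<in> NormalCone (Cset K j) ((f t - s) - A w) \<longleftrightarrow> R (f t - s) = w"
    using R by auto
  ultimately show ?thesis using NormalCone_Cset_subset[OF K] by blast
qed

section \<open>Integral inequalities and uniform limits\<close>

lemma continuous_on_initial_segments:
  fixes I :: "real set" and f :: "real \<Rightarrow> 'a::topological_space"
  assumes I: "I \<subseteq> {0..}" "\<And>t. t \<in> I \<Longrightarrow> {0..t} \<subseteq> I"
    and cont: "\<And>b. b \<in> I \<Longrightarrow> continuous_on {0..b} f"
  shows "continuous_on I f"
proof (rule continuous_on_eq_continuous_within[THEN iffD2], rule ballI)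
  fix x assume x: "x \<in> I"
  then have x0: "x \<in> {0..x}" using I(1) by auto
  show "continuous (at x within I) f"
  proof (cases "\<exists>b\<in>I. x < b")
    case True
    then obtain b where b: "b \<in> I" "x < b" by blast
    have "I \<inter> {..<b} = {0..b} \<inter> {..<b}" using I b by auto
    then have "at x within I = at x within {0..b}"
      by (intro at_within_nhd[where S = "{..<b}"]) (use b in auto)
    moreover have "x \<in> {0..b}" using x0 b by auto
    ultimately show ?thesis
      using cont[OF b(1)] by (simp add: continuous_on_eq_continuous_within)
  next
    case False
    then have "I \<subseteq> {0..x}" using I(1) by force
    then show ?thesis
      using cont[OF x] x0 by (meson continuous_on_eq_continuous_within continuous_within_subset)
  qed
qed

lemma has_integral_power_div_fact:
  fixes s c :: real
  assumes "0 \<le> s"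
  shows "((\<lambda>r. c^n * r^n / fact n) has_integral (c^n * s^(Suc n) / fact (Suc n))) {0..s}"
proof -
  have "((\<lambda>r. c^n * r^(Suc n) / fact (Suc n)) has_real_derivative
          c^n * (real (Suc n) * x^n) / fact (Suc n)) (at x within {0..s})" for x
    by (intro derivative_eq_intros) auto
  moreover have "c^n * (real (Suc n) * x^n) / fact (Suc n) = c^n * x^n / fact n" for x
    by (simp add: fact_Suc field_simps del: of_nat_Suc)
  ultimately have "((\<lambda>r. c^n * r^(Suc n) / fact (Suc n)) has_real_derivative c^n * x^n / fact n)
          (at x within {0..s})" for x
    by simp
  then show ?thesis
    using fundamental_theorem_of_calculus[OF assms, of "\<lambda>r. c^n * r^(Suc n) / fact (Suc n)"]
    by (simp add: has_real_derivative_iff_has_vector_derivative)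
qed

lemma iterated_integral_bound:
  fixes d :: "nat \<Rightarrow> real \<Rightarrow> real"
  assumes c: "c \<ge> 0"
    and cont: "\<And>n. continuous_on {0..b} (d n)"
    and d0: "\<And>s. s \<in> {0..b} \<Longrightarrow> d 0 s \<le> M"
    and d_Suc: "\<And>n s. s \<in> {0..b} \<Longrightarrow> d (Suc n) s \<le> c * integral {0..s} (d n)"
  shows "s \<in> {0..b} \<Longrightarrow> d n s \<le> M * (c * s)^n / fact n"
proof (induction n arbitrary: s)
  case 0
  then show ?case using d0 by simp
next
  case (Suc n)
  then have s: "0 \<le> s" "{0..s} \<subseteq> {0..b}" by auto
  have int: "((\<lambda>r. M * (c^n * r^n / fact n)) has_integral M * (c^n * s^(Suc n) / fact (Suc n))) {0..s}"
    by (rule has_integral_mult_right[OF has_integral_power_div_fact[OF s(1)]])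
  have "integral {0..s} (d n) \<le> integral {0..s} (\<lambda>r. M * (c^n * r^n / fact n))"
  proof (rule integral_le)
    show "d n integrable_on {0..s}"
      using continuous_on_subset[OF cont s(2)] by (rule integrable_continuous_interval)
    show "(\<lambda>r. M * (c^n * r^n / fact n)) integrable_on {0..s}"
      using int by blast
    show "d n r \<le> M * (c^n * r^n / fact n)" if "r \<in> {0..s}" for r
      using Suc.IH[of r] that s(2) by (auto simp: power_mult_distrib)
  qed
  also have "\<dots> = M * (c^n * s^(Suc n) / fact (Suc n))"
    using int by (rule integral_unique)
  finally have "c * integral {0..s} (d n) \<le> c * (M * (c^n * s^(Suc n) / fact (Suc n)))"
    using c by (rule mult_left_mono)
  then show ?case
    using d_Suc[OF Suc.prems, of n] by (simp add: power_mult_distrib mult_ac)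
qed

lemma summable_power_div_fact: "summable (\<lambda>n. M * x^n / fact n :: real)"
  using summable_mult[OF summable_exp[of x], of M] by (simp add: divide_inverse mult_ac)

lemma integral_inequality_imp_nonpos:
  fixes \<phi> :: "real \<Rightarrow> real"
  assumes c: "c \<ge> 0" and cont: "continuous_on {0..b} \<phi>"
    and ineq: "\<And>s. s \<in> {0..b} \<Longrightarrow> \<phi> s \<le> c * integral {0..s} \<phi>"
    and t: "t \<in> {0..b}"
  shows "\<phi> t \<le> 0"
proof -
  obtain M where M: "\<forall>s\<in>{0..b}. norm (\<phi> s) \<le> M"
    using compact_imp_bounded[OF compact_continuous_image[OF cont compact_Icc]]
    unfolding bounded_iff by blast
  have "\<phi> t \<le> M * (c * t)^n / fact n" for n
    by (rule iterated_integral_bound[of c b "\<lambda>_. \<phi>" M, OF c cont _ ineq t]) (use M in \<open>auto dest: abs_le_D1\<close>)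
  moreover have "(\<lambda>n. M * (c * t)^n / fact n) \<longlonglongrightarrow> 0"
    by (rule summable_LIMSEQ_zero[OF summable_power_div_fact])
  ultimately show ?thesis
    by (intro LIMSEQ_le_const) auto
qed

lemma integral_norm_diff_tendsto_zero:
  fixes w :: "nat \<Rightarrow> real \<Rightarrow> 'a::real_normed_vector"
  assumes lim: "uniform_limit {0..t} w W sequentially"
    and cont: "\<And>n. continuous_on {0..t} (w n)" "continuous_on {0..t} W"
  shows "(\<lambda>n. integral {0..t} (\<lambda>s. norm (w n s - W s))) \<longlonglongrightarrow> 0"
proof -
  have "uniform_limit {0..t} (\<lambda>n s. norm (w n s - W s)) (\<lambda>s. 0) sequentially"
    using lim by (simp add: uniform_limit_iff dist_norm)
  moreover have "continuous_on {0..t} (\<lambda>s. norm (w n s - W s))" for n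
    using cont by (intro continuous_intros)
  ultimately obtain J L where J: "\<And>n. ((\<lambda>s. norm (w n s - W s)) has_integral J n) {0..t}"
    and L: "((\<lambda>s. 0) has_integral L) {0..t}" and "J \<longlonglongrightarrow> L"
    by (rule uniform_limit_integral) auto
  moreover have "J = (\<lambda>n. integral {0..t} (\<lambda>s. norm (w n s - W s)))"
    using J by (auto intro: integral_unique[symmetric])
  moreover have "L = 0" using L by (simp add: has_integral_0_eq)
  ultimately show ?thesis by simp
qed

lemma Weierstrass_m_test_complete:
  fixes f :: "nat \<Rightarrow> 'x::topological_space \<Rightarrow> 'a::{real_normed_vector,complete_space}"
  assumes bound: "\<And>n x. x \<in> X \<Longrightarrow> norm (f n x) \<le> M n" and "summable M"
  shows "uniform_limit X (\<lambda>n x. \<Sum>i<n. f i x) (\<lambda>x. \<Sum>i. f i x) sequentially"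
proof (rule uniform_limit_suminf)
  show "uniformly_convergent_on X (\<lambda>n x. \<Sum>i<n. f i x)"
    unfolding uniformly_convergent_on_sum_iff
  proof (intro allI impI)
    fix e :: real assume "e > 0"
    then obtain N where N: "\<And>m n. m \<ge> N \<Longrightarrow> norm (sum M {m..<n}) < e"
      using \<open>summable M\<close> unfolding summable_Cauchy by blast
    have "norm (\<Sum>i=m..<n. f i x) < e" if "N \<le> m" "x \<in> X" for m n x
    proof -
      have "norm (\<Sum>i=m..<n. f i x) \<le> sum M {m..<n}"
        using bound[OF that(2)] by (simp add: sum_norm_le)
      also have "\<dots> \<le> norm (sum M {m..<n})" by simp
      finally show ?thesis using N[OF that(1), of n] by linarith
    qed
    then show "\<exists>N. \<forall>m n x. N \<le> m \<longrightarrow> m \<le> n \<longrightarrow> x \<in> X \<longrightarrow> norm (\<Sum>i=m..<n. f i x) < e"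
      by blast
  qed
qed

section \<open>Fixed points of history-dependent operators\<close>

lemma history_dependentD:
  assumes "history_dependent I S" "{0..b} \<subseteq> I"
  obtains c where "c > 0"
    "\<forall>w1 w2. continuous_on I w1 \<and> continuous_on I w2 \<longrightarrow>
       (\<forall>t\<in>{0..b}. norm (S w1 t - S w2 t) \<le> c * integral {0..t} (\<lambda>s. norm (w1 s - w2 s)))"
  using assms unfolding history_dependent_def by (meson compact_Icc)

lemma history_dependent_comp_lipschitz:
  fixes S :: "(real \<Rightarrow> 'a::real_normed_vector) \<Rightarrow> real \<Rightarrow> 'a" and R :: "'a \<Rightarrow> 'a"
  assumes hist: "history_dependent I S" and R: "k-lipschitz_on UNIV R"
  shows "history_dependent I (\<lambda>w t. R (f t - S w t))"
  unfolding history_dependent_def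
proof (intro allI impI)
  fix J :: "real set" assume "compact J \<and> J \<subseteq> I"
  then obtain L where L: "L > 0" and S_est: "\<forall>u1 u2. continuous_on I u1 \<and> continuous_on I u2 \<longrightarrow>
      (\<forall>t\<in>J. norm (S u1 t - S u2 t) \<le> L * integral {0..t} (\<lambda>s. norm (u1 s - u2 s)))"
    using hist unfolding history_dependent_def by blast
  have k: "k \<ge> 0" and R_lip: "\<And>x y. norm (R x - R y) \<le> k * norm (x - y)"
    using R unfolding lipschitz_on_def dist_norm by auto
  \<comment> \<open>The definition asks for a positive constant, and \<open>k\<close> may vanish.\<close>
  have "norm (R (f t - S u1 t) - R (f t - S u2 t)) \<le> ((k + 1) * L) * integral {0..t} (\<lambda>s. norm (u1 s - u2 s))"
    if "continuous_on I u1 \<and> continuous_on I u2" "t \<in> J" for u1 u2 t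
  proof -
    let ?int = "integral {0..t} (\<lambda>s. norm (u1 s - u2 s))"
    have S_le: "norm (S u1 t - S u2 t) \<le> L * ?int" using S_est that by blast
    have "norm (R (f t - S u1 t) - R (f t - S u2 t)) \<le> k * norm (S u1 t - S u2 t)"
      using R_lip[of "f t - S u1 t" "f t - S u2 t"] by (simp add: norm_minus_commute)
    also have "\<dots> \<le> k * (L * ?int)" using S_le k by (rule mult_left_mono)
    also have "\<dots> \<le> (k + 1) * (L * ?int)"
      using order_trans[OF norm_ge_zero S_le] by (simp add: algebra_simps)
    finally show ?thesis by (simp add: mult.assoc)
  qed
  moreover have "(k + 1) * L > 0" using k L by simp
  ultimately show "\<exists>L>0. \<forall>u1 u2. continuous_on I u1 \<and> continuous_on I u2 \<longrightarrow>
      (\<forall>t\<in>J. norm (R (f t - S u1 t) - R (f t - S u2 t)) \<le> L * integral {0..t} (\<lambda>s. norm (u1 s - u2 s)))"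
    by blast
qed

lemma history_dependent_tendsto:
  assumes hist: "history_dependent I \<Lambda>" and t: "0 \<le> t" "{0..t} \<subseteq> I"
    and cont: "\<And>n. continuous_on I (w n)" "continuous_on I W"
    and lim: "uniform_limit {0..t} w W sequentially"
  shows "(\<lambda>n. \<Lambda> (w n) t) \<longlonglongrightarrow> \<Lambda> W t"
proof -
  obtain c where est: "\<forall>w1 w2. continuous_on I w1 \<and> continuous_on I w2 \<longrightarrow>
       (\<forall>s\<in>{0..t}. norm (\<Lambda> w1 s - \<Lambda> w2 s) \<le> c * integral {0..s} (\<lambda>r. norm (w1 r - w2 r)))"
    by (rule history_dependentD[OF hist t(2)])
  have bound: "\<forall>n. norm (\<Lambda> (w n) t - \<Lambda> W t) \<le> c * integral {0..t} (\<lambda>s. norm (w n s - W s))"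
    using est cont t(1) by simp
  have "(\<lambda>n. integral {0..t} (\<lambda>s. norm (w n s - W s))) \<longlonglongrightarrow> 0"
    using lim continuous_on_subset[OF cont(1) t(2)] continuous_on_subset[OF cont(2) t(2)]
    by (rule integral_norm_diff_tendsto_zero)
  from Lim_null_comparison[OF always_eventually[OF bound] tendsto_mult_right_zero[OF this]]
  have "(\<lambda>n. \<Lambda> (w n) t - \<Lambda> W t) \<longlonglongrightarrow> 0" .
  then show ?thesis by (rule LIM_zero_cancel)
qed

lemma history_dependent_iterates_bound:
  assumes hist: "history_dependent I \<Lambda>" and b: "{0..b} \<subseteq> I"
    and u_cont: "\<And>n. continuous_on I (u n)" and u_Suc: "\<And>n. u (Suc n) = \<Lambda> (u n)"
  obtains a where "summable a" "\<forall>n. \<forall>s\<in>{0..b}. norm (u (Suc n) s - u n s) \<le> a n"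
proof -
  obtain c where "c > 0" and est: "\<forall>w1 w2. continuous_on I w1 \<and> continuous_on I w2 \<longrightarrow>
       (\<forall>s\<in>{0..b}. norm (\<Lambda> w1 s - \<Lambda> w2 s) \<le> c * integral {0..s} (\<lambda>r. norm (w1 r - w2 r)))"
    by (rule history_dependentD[OF hist b])
  let ?d = "\<lambda>n s. norm (u (Suc n) s - u n s)"
  have d_cont: "continuous_on {0..b} (?d n)" for n
    using continuous_on_subset[OF u_cont b] by (intro continuous_intros)
  obtain M where M: "\<forall>s\<in>{0..b}. norm (?d 0 s) \<le> M"
    using compact_imp_bounded[OF compact_continuous_image[OF d_cont compact_Icc]]
    unfolding bounded_iff by blast
  have d_Suc: "?d (Suc n) s \<le> c * integral {0..s} (?d n)" if "s \<in> {0..b}" for n s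
  proof -
    have "norm (\<Lambda> (u (Suc n)) s - \<Lambda> (u n) s) \<le> c * integral {0..s} (?d n)"
      using est u_cont that by blast
    then show ?thesis by (simp only: u_Suc[symmetric])
  qed
  have "?d n s \<le> M * (c * b)^n / fact n" if s: "s \<in> {0..b}" for n s
  proof -
    have "?d n s \<le> M * (c * s)^n / fact n"
      by (rule iterated_integral_bound[of c b ?d M, OF _ d_cont _ d_Suc s])
        (use \<open>c > 0\<close> M in auto)
    also have "\<dots> \<le> M * (c * b)^n / fact n"
    proof -
      have "M \<ge> 0" using M s by (meson norm_ge_zero order_trans)
      moreover have "(c * s)^n \<le> (c * b)^n"
        using s \<open>c > 0\<close> by (simp add: power_mono)
      ultimately show ?thesis by (simp add: divide_right_mono mult_left_mono)
    qed
    finally show ?thesis .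
  qed
  then show ?thesis using that summable_power_div_fact by blast
qed

lemma history_dependent_fixed_point_exists:
  fixes \<Lambda> :: "(real \<Rightarrow> 'a::{real_normed_vector,complete_space}) \<Rightarrow> real \<Rightarrow> 'a"
  assumes I: "I \<subseteq> {0..}" "\<And>t. t \<in> I \<Longrightarrow> {0..t} \<subseteq> I"
    and maps: "\<And>w. continuous_on I w \<Longrightarrow> continuous_on I (\<Lambda> w)"
    and hist: "history_dependent I \<Lambda>"
  obtains u where "continuous_on I u" "\<forall>t\<in>I. \<Lambda> u t = u t"
proof -
  define u where "u n = (\<Lambda> ^^ n) (\<lambda>_. 0)" for n
  have u_Suc: "u (Suc n) = \<Lambda> (u n)" for n by (simp add: u_def)
  have u_cont: "continuous_on I (u n)" for n
    by (induction n) (simp_all add: u_def maps)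
  have u_telescope: "(\<lambda>n t. \<Sum>i<n. u (Suc i) t - u i t) = u"
    using sum_lessThan_telescope[of "\<lambda>i. u i t" for t] by (simp add: u_def fun_eq_iff)
  define U where "U t = (\<Sum>i. u (Suc i) t - u i t)" for t
  have U_lim: "uniform_limit {0..b} u U sequentially" if b: "b \<in> I" for b
  proof -
    obtain a where "summable a" "\<forall>n. \<forall>s\<in>{0..b}. norm (u (Suc n) s - u n s) \<le> a n"
      by (rule history_dependent_iterates_bound[where u = u, OF hist I(2)[OF b] u_cont u_Suc])
    from Weierstrass_m_test_complete[of "{0..b}" "\<lambda>i s. u (Suc i) s - u i s", OF _ this(1)] this(2)
    show ?thesis unfolding U_def u_telescope by blast
  qed
  have U_cont: "continuous_on I U"
  proof (rule continuous_on_initial_segments[OF I])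
    fix b assume "b \<in> I"
    show "continuous_on {0..b} U"
      using continuous_on_subset[OF u_cont I(2)[OF \<open>b \<in> I\<close>]] U_lim[OF \<open>b \<in> I\<close>]
      by (intro uniform_limit_theorem[OF always_eventually]) auto
  qed
  have "\<Lambda> U t = U t" if t: "t \<in> I" for t
  proof (rule LIMSEQ_unique)
    have "0 \<le> t" using I(1) t by auto
    then show "(\<lambda>n. \<Lambda> (u n) t) \<longlonglongrightarrow> \<Lambda> U t"
      by (rule history_dependent_tendsto[OF hist _ I(2)[OF t] u_cont U_cont U_lim[OF t]])
    have "(\<lambda>n. u n t) \<longlonglongrightarrow> U t"
      using tendsto_uniform_limitI[OF U_lim[OF t]] \<open>0 \<le> t\<close> by simp
    then show "(\<lambda>n. \<Lambda> (u n) t) \<longlonglongrightarrow> U t"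
      unfolding u_Suc[symmetric] by (rule LIMSEQ_Suc)
  qed
  then show ?thesis using U_cont that by blast
qed

lemma history_dependent_fixed_point_unique:
  assumes I: "I \<subseteq> {0..}" "\<And>t. t \<in> I \<Longrightarrow> {0..t} \<subseteq> I"
    and hist: "history_dependent I \<Lambda>"
    and u: "continuous_on I u" "\<forall>t\<in>I. \<Lambda> u t = u t"
    and v: "continuous_on I v" "\<forall>t\<in>I. \<Lambda> v t = v t"
    and t: "t \<in> I"
  shows "v t = u t"
proof -
  have sub: "{0..t} \<subseteq> I" and "t \<in> {0..t}" using I t by auto
  obtain c where "c > 0" and est: "\<forall>w1 w2. continuous_on I w1 \<and> continuous_on I w2 \<longrightarrow>
       (\<forall>s\<in>{0..t}. norm (\<Lambda> w1 s - \<Lambda> w2 s) \<le> c * integral {0..s} (\<lambda>r. norm (w1 r - w2 r)))"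
    by (rule history_dependentD[OF hist sub])
  have "norm (v s - u s) \<le> c * integral {0..s} (\<lambda>r. norm (v r - u r))" if s: "s \<in> {0..t}" for s
  proof -
    have "s \<in> I" using sub s by blast
    then show ?thesis using est[rule_format, OF conjI[OF v(1) u(1)] s] u(2) v(2) by simp
  qed
  moreover have "continuous_on {0..t} (\<lambda>s. norm (v s - u s))"
    using continuous_on_subset[OF u(1) sub] continuous_on_subset[OF v(1) sub]
    by (intro continuous_intros)
  ultimately have "norm (v t - u t) \<le> 0"
    using \<open>c > 0\<close> \<open>t \<in> {0..t}\<close> integral_inequality_imp_nonpos[of c t "\<lambda>s. norm (v s - u s)"]
    by auto
  then show ?thesis by simp
qed

theorem corollary3p3:
  fixes I :: "real set" and T :: real
    and K :: "'a::{real_inner, complete_space} set"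
    and A :: "'a \<Rightarrow> 'a" and mA LA :: real
    and f :: "real \<Rightarrow> 'a"
    and S :: "(real \<Rightarrow> 'a) \<Rightarrow> (real \<Rightarrow> 'a)"
    and j :: "'a \<Rightarrow> real"
  assumes I_def: "(T > 0 \<and> I = {0..T}) \<or> I = {0..}"
    and K_ne: "K \<noteq> {}" and K_closed: "closed K" and K_convex: "convex K" and K_cone: "cone K"
    and mA_pos: "mA > 0" and LA_pos: "LA > 0"
    and A_strong: "\<And>u v. inner (A u - A v) (u - v) \<ge> mA * (norm (u - v))\<^sup>2"
    and A_lip: "\<And>u v. norm (A u - A v) \<le> LA * norm (u - v)"
    and f_cont: "continuous_on I f"
    and S_maps: "\<And>u. continuous_on I u \<Longrightarrow> continuous_on I (S u)"
    and S_hist: "history_dependent I S"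
    and j_convex: "convex_on K j"
    and j_hom: "\<And>c v. c > 0 \<Longrightarrow> v \<in> K \<Longrightarrow> j (c *\<^sub>R v) = c * j v"
    and j_lip: "\<exists>L. L-lipschitz_on K j"
  shows "\<exists>u. continuous_on I u \<and> (\<forall>t\<in>I. u t \<in> K) \<and>
            (\<forall>t\<in>I. - u t \<in> NormalCone (Ct K j f t) (A (u t) + S u t)) \<and>
            (\<forall>v. continuous_on I v \<and> (\<forall>t\<in>I. v t \<in> K) \<and>
                 (\<forall>t\<in>I. - v t \<in> NormalCone (Ct K j f t) (A (v t) + S v t))
                 \<longrightarrow> (\<forall>t\<in>I. v t = u t))"
proof -
  let ?C = "Cset K j"
  have I: "I \<subseteq> {0..}" "\<And>t. t \<in> I \<Longrightarrow> {0..t} \<subseteq> I" using I_def by auto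
  note K = K_closed K_convex K_cone K_ne
  have j_cont: "continuous_on K j" using j_lip lipschitz_on_continuous_on by blast
  have C: "closed ?C" "convex ?C" "?C \<noteq> {}"
    using closed_Cset convex_Cset Cset_nonempty[OF K j_convex j_cont j_hom] by auto
  obtain R where R_lip: "(1 / mA)-lipschitz_on UNIV R"
    and R: "\<forall>g u. u \<in> NormalCone ?C (g - A u) \<longleftrightarrow> u = R g"
    by (rule NormalCone_inclusion_solution_map[OF mA_pos LA_pos A_strong A_lip C])
  have solves_iff: "w t \<in> K \<and> - w t \<in> NormalCone (Ct K j f t) (A (w t) + S w t) \<longleftrightarrow>
      R (f t - S w t) = w t" for w t
    by (rule uminus_in_NormalCone_Ct_iff[OF K R])
  let ?\<Lambda> = "\<lambda>w t. R (f t - S w t)"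
  have maps: "continuous_on I (?\<Lambda> w)" if "continuous_on I w" for w
    by (rule continuous_on_compose2[OF lipschitz_on_continuous_on[OF R_lip]])
      (auto intro: continuous_on_diff f_cont S_maps that)
  have hist: "history_dependent I ?\<Lambda>"
    by (rule history_dependent_comp_lipschitz[OF S_hist R_lip])
  obtain u where u: "continuous_on I u" "\<forall>t\<in>I. ?\<Lambda> u t = u t"
    by (rule history_dependent_fixed_point_exists[OF I maps hist])
  have "\<forall>t\<in>I. v t = u t"
    if "continuous_on I v" "\<forall>t\<in>I. v t \<in> K \<and> - v t \<in> NormalCone (Ct K j f t) (A (v t) + S v t)" for v
    using history_dependent_fixed_point_unique[OF I hist u that(1)] that(2) solves_iff by blast
  then show ?thesis using u solves_iff by blast
qed

end
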